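(* Let $N\ge 6$ with $N\equiv 2\pmod 4$. Then for every $k$ with $1\le k<N/4$, $$\mathrm{scale}_{N/2}[k]=\mathrm{scale}_N[2k]\,\frac{\mathrm{GenScale}[N/2]}{\mathrm{GenScale}[N]}.$$ Consequently $\mathrm{scale}_N[N/2-2]=\mathrm{GenScale}[N/2]$.
   Context: For an integer $n\ge3$ and $1\le k<n/2$, $\mathrm{scale}_n[k]=\tan(\pi/n)/\tan(k\pi/n)$. $\langle n/2\rangle$ is the greatest integer strictly less than $n/2$ and $\mathrm{GenScale}[n]=\mathrm{scale}_n[\langle n/2\rangle]$. *)

theory Defs
  imports Complex_Main
begin

definition scale :: "nat \<Rightarrow> nat \<Rightarrow> real" where
  "scale n k = tan (pi / real n) / tan (real k * pi / real n)"

definition half_below :: "nat \<Rightarrow> nat" where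
  "half_below n = (n - 1) div 2"

definition GenScale :: "nat \<Rightarrow> real" where
  "GenScale n = scale n (half_below n)"

end

theory Submission
  imports Defs
begin

text \<open>Write \<open>N = 2M\<close> with \<open>M = 2m + 1\<close> odd. Doubling both \<open>n\<close> and \<open>k\<close> leaves the angle
  \<open>k\<pi>/n\<close> unchanged, so \<open>scale\<^sub>M[k] / scale\<^sub>N[2k] = tan(\<pi>/M) / tan(\<pi>/N)\<close> for every \<open>k\<close>.
  The generic scales are evaluated through \<open>tan(\<pi>/2 - x) = cot x\<close>, since \<open>m\<pi>/M = \<pi>/2 - \<pi>/N\<close>:
  \<open>GenScale[M] = tan(\<pi>/M) tan(\<pi>/N)\<close> and \<open>GenScale[N] = tan(\<pi>/N)\<^sup>2\<close>, whose ratio is the same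
  constant. Likewise \<open>(M - 2)\<pi>/N = \<pi>/2 - \<pi>/M\<close> gives \<open>scale\<^sub>N[M - 2] = tan(\<pi>/N) tan(\<pi>/M)\<close>.\<close>

lemma scale_double_index:
  "scale n k * tan (pi / real (2 * n)) = scale (2 * n) (2 * k) * tan (pi / real n)"
proof -
  have "real (2 * k) * pi / real (2 * n) = real k * pi / real n"
    by (cases "n = 0") (simp_all add: field_simps)
  then show ?thesis
    unfolding scale_def by simp
qed

lemma GenScale_odd:
  "GenScale (2 * m + 1) = tan (pi / real (2 * m + 1)) * tan (pi / real (4 * m + 2))"
proof -
  have angle: "real m * pi / real (2 * m + 1) = pi / 2 - pi / real (4 * m + 2)"
    by (simp add: field_simps)
  have "GenScale (2 * m + 1) = tan (pi / real (2 * m + 1)) / tan (pi / 2 - pi / real (4 * m + 2))"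
    unfolding GenScale_def scale_def half_below_def angle[symmetric] by simp
  then show ?thesis
    unfolding tan_cot by (simp add: divide_inverse)
qed

lemma GenScale_twice_odd:
  "GenScale (4 * m + 2) = tan (pi / real (4 * m + 2)) ^ 2"
proof -
  have angle: "real (2 * m) * pi / real (4 * m + 2) = pi / 2 - pi / real (4 * m + 2)"
    by (simp add: field_simps)
  have "half_below (4 * m + 2) = 2 * m"
    unfolding half_below_def by simp
  then have "GenScale (4 * m + 2) = tan (pi / real (4 * m + 2)) / tan (pi / 2 - pi / real (4 * m + 2))"
    unfolding GenScale_def scale_def angle[symmetric] by simp
  then show ?thesis
    unfolding tan_cot by (simp add: divide_inverse power2_eq_square)
qed

lemma scale_twice_odd_complement:
  assumes "1 \<le> m"
  shows "scale (4 * m + 2) (2 * m - 1) = tan (pi / real (4 * m + 2)) * tan (pi / real (2 * m + 1))"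
proof -
  have angle: "real (2 * m - 1) * pi / real (4 * m + 2) = pi / 2 - pi / real (2 * m + 1)"
    using assms by (simp add: of_nat_diff field_simps)
  have "scale (4 * m + 2) (2 * m - 1) = tan (pi / real (4 * m + 2)) / tan (pi / 2 - pi / real (2 * m + 1))"
    unfolding scale_def angle ..
  then show ?thesis
    unfolding tan_cot by (simp add: divide_inverse)
qed

theorem lemma6:
  fixes N :: nat
  assumes "N \<ge> 6" and "N mod 4 = 2"
  shows "(\<forall>k::nat. 1 \<le> k \<and> 4 * k < N \<longrightarrow>
            scale (N div 2) k = scale N (2 * k) * (GenScale (N div 2) / GenScale N))
         \<and> scale N (N div 2 - 2) = GenScale (N div 2)"
proof -
  define m where "m = N div 4"
  have N: "N = 4 * m + 2" and half: "N div 2 = 2 * m + 1" and "1 \<le> m"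
    using assms unfolding m_def by presburger+
  have "tan (pi / real N) > 0"
    using \<open>1 \<le> m\<close> by (intro tan_gt_zero) (auto simp: N field_simps)
  then have ratio: "GenScale (N div 2) / GenScale N = tan (pi / real (N div 2)) / tan (pi / real N)"
    using GenScale_odd[of m] GenScale_twice_odd[of m] unfolding half N by (simp add: power2_eq_square)
  have "scale (N div 2) k = scale N (2 * k) * (GenScale (N div 2) / GenScale N)" for k
    using scale_double_index[of "N div 2" k] \<open>tan (pi / real N) > 0\<close> N
    unfolding ratio by (simp add: field_simps)
  moreover have "scale N (N div 2 - 2) = GenScale (N div 2)"
    using scale_twice_odd_complement[OF \<open>1 \<le> m\<close>] GenScale_odd[of m] unfolding half N
    by (simp add: mult.commute)
  ultimately show ?thesis
    by blast
qed

end
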